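(* Let $G=(X,b,m,c)$ be a weighted graph with $c=0$, let $p\in(1,\infty)$, let $V\subseteq X$ and $\psi,\theta\colon X\to\mathbb{R}$. A function $u\in K_{\psi,\theta}(V)$ is a solution to the obstacle problem on $V$ with obstacle $\psi$ and boundary data $\theta$ if and only if $$\mathcal{E}_{p,\overline V}(u,u)=\min\{\mathcal{E}_{p,\overline V}(v,v):v\in K_{\psi,\theta}(V)\}.$$
   Context: Weighted graph $G=(X,b,m,c)$: $X$ countably infinite; $b$ symmetric, nonnegative, zero on the diagonal, $\sum_yb(x,y)<\infty$; $m>0$; $c\ge0$; $x\sim y$ iff $b(x,y)>0$; $X$ connected. $\partial_eV=\{y\in X\setminus V:y\sim z\text{ for some }z\in V\}$, $\overline V=V\cup\partial_eV$. $a^{\langle p-1\rangle}=|a|^{p-2}a$. For $U\subseteq X$ and functions $u,w$, $\mathcal{E}_{p,U}(u,w)=\frac12\sum_{x,y\in U}b(x,y)(u(x)-u(y))^{\langle p-1\rangle}(w(x)-w(y))$ (with $c=0$), whenever the sum converges absolutely. $D^p(\overline V)=\{v\colon X\to\mathbb{R}:\sum_{x,y\in\overline V}b(x,y)|v(x)-v(y)|^p<\infty\}$. $K_{\psi,\theta}(V)=\{v\in D^p(\overline V):v\ge\psi\text{ on }V,\ v=\theta\text{ on }\partial_eV\}$. A solution to the obstacle problem on $V$ with obstacle $\psi$ and boundary data $\theta$ is $u\in K_{\psi,\theta}(V)$ with $\mathcal{E}_{p,\overline V}(u,v-u)\ge0$ for all $v\in K_{\psi,\theta}(V)$. *)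

theory Defs
  imports "HOL-Analysis.Analysis"
begin

text \<open>Weighted graph (X,b,m,c) with vertex set X = UNIV of type 'a.\<close>

definition graph_edges :: "('a \<Rightarrow> 'a \<Rightarrow> real) \<Rightarrow> ('a \<times> 'a) set" where
  "graph_edges b = {(x, y). b x y > 0}"

definition weighted_graph ::
  "('a \<Rightarrow> 'a \<Rightarrow> real) \<Rightarrow> ('a \<Rightarrow> real) \<Rightarrow> ('a \<Rightarrow> real) \<Rightarrow> bool" where
  "weighted_graph b m c \<longleftrightarrow>
     countable (UNIV :: 'a set) \<and> infinite (UNIV :: 'a set) \<and>
     (\<forall>x y. b x y = b y x) \<and> (\<forall>x y. b x y \<ge> 0) \<and> (\<forall>x. b x x = 0) \<and>
     (\<forall>x. (\<lambda>y. b x y) summable_on UNIV) \<and>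
     (\<forall>x. m x > 0) \<and> (\<forall>x. c x \<ge> 0) \<and>
     (\<forall>x y. (x, y) \<in> (graph_edges b)\<^sup>*)"

definition ext_boundary :: "('a \<Rightarrow> 'a \<Rightarrow> real) \<Rightarrow> 'a set \<Rightarrow> 'a set" where
  "ext_boundary b V = {y. y \<notin> V \<and> (\<exists>z\<in>V. b y z > 0)}"

definition closure_set :: "('a \<Rightarrow> 'a \<Rightarrow> real) \<Rightarrow> 'a set \<Rightarrow> 'a set" where
  "closure_set b V = V \<union> ext_boundary b V"

text \<open>a^{<q>} = |a|^{q-1} a = sgn a * |a|^q\<close>
definition spow :: "real \<Rightarrow> real \<Rightarrow> real" where
  "spow a q = sgn a * \<bar>a\<bar> powr q"

text \<open>E_{p,U}(u,w) with c = 0 (sum taken as an unordered sum over U x U).\<close>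
definition energy ::
  "('a \<Rightarrow> 'a \<Rightarrow> real) \<Rightarrow> real \<Rightarrow> 'a set \<Rightarrow> ('a \<Rightarrow> real) \<Rightarrow> ('a \<Rightarrow> real) \<Rightarrow> real" where
  "energy b p U u w =
     1/2 * (\<Sum>\<^sub>\<infinity>(x, y)\<in>U \<times> U. b x y * spow (u x - u y) (p - 1) * (w x - w y))"

definition Dp :: "('a \<Rightarrow> 'a \<Rightarrow> real) \<Rightarrow> real \<Rightarrow> 'a set \<Rightarrow> ('a \<Rightarrow> real) set" where
  "Dp b p W = {v. (\<lambda>(x, y). b x y * \<bar>v x - v y\<bar> powr p) summable_on (W \<times> W)}"

definition Kset ::
  "('a \<Rightarrow> 'a \<Rightarrow> real) \<Rightarrow> real \<Rightarrow> 'a set \<Rightarrow> ('a \<Rightarrow> real) \<Rightarrow> ('a \<Rightarrow> real) \<Rightarrow> ('a \<Rightarrow> real) set" where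
  "Kset b p V \<psi> \<theta> = {v \<in> Dp b p (closure_set b V).
      (\<forall>x\<in>V. v x \<ge> \<psi> x) \<and> (\<forall>x\<in>ext_boundary b V. v x = \<theta> x)}"

definition obstacle_solution ::
  "('a \<Rightarrow> 'a \<Rightarrow> real) \<Rightarrow> real \<Rightarrow> 'a set \<Rightarrow> ('a \<Rightarrow> real) \<Rightarrow> ('a \<Rightarrow> real) \<Rightarrow> ('a \<Rightarrow> real) \<Rightarrow> bool" where
  "obstacle_solution b p V \<psi> \<theta> u \<longleftrightarrow>
     u \<in> Kset b p V \<psi> \<theta> \<and>
     (\<forall>v\<in>Kset b p V \<psi> \<theta>. energy b p (closure_set b V) u (\<lambda>x. v x - u x) \<ge> 0)"

end

theory Submission
  imports Defs
begin

text \<open>Along a segment u + t (v - u), 0 \<le> t \<le> 1, inside the convex set K the energy is a convex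
  function of t, because z \<mapsto> \<bar>z\<bar>^p is convex, and its right derivative at t = 0 is p E(u, v - u).
  If the variational inequality holds, the tangent inequality
  \<bar>y\<bar>^p \<ge> \<bar>x\<bar>^p + p sgn x \<bar>x\<bar>^(p-1) (y - x), summed over all edges, shows that u minimises
  the energy. Conversely, at a minimiser the difference quotients (E(u + t (v - u)) - E(u)) / t are
  nonnegative, and they converge to p E(u, v - u): termwise they decrease to the derivative as t
  decreases to 0, so the quotient at t = 1 dominates them and the limit may be taken inside the sum.\<close>

lemma spow_mult_self: "spow a q * a = \<bar>a\<bar> powr (q + 1)"
proof -
  have "spow a q * a = (sgn a * a) * \<bar>a\<bar> powr q"
    by (simp add: spow_def ac_simps)
  also have "\<dots> = \<bar>a\<bar> * \<bar>a\<bar> powr q"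
    by (simp add: sgn_if)
  finally show ?thesis
    using powr_mult_base'[of "\<bar>a\<bar>" q] by (simp add: add.commute)
qed

lemma abs_spow_mult_le:
  assumes "1 \<le> p"
  shows "\<bar>spow a (p - 1) * c\<bar> \<le> \<bar>a\<bar> powr p + \<bar>c\<bar> powr p"
proof -
  have "\<bar>spow a (p - 1) * c\<bar> \<le> \<bar>a\<bar> powr (p - 1) * \<bar>c\<bar>"
    by (simp add: spow_def abs_mult sgn_if)
  also have "\<dots> \<le> max \<bar>a\<bar> \<bar>c\<bar> powr (p - 1) * max \<bar>a\<bar> \<bar>c\<bar>"
    using assms by (intro mult_mono powr_mono2) auto
  also have "\<dots> = max \<bar>a\<bar> \<bar>c\<bar> powr p"
    using powr_mult_base'[of "max \<bar>a\<bar> \<bar>c\<bar>" "p - 1"] by (simp add: mult.commute)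
  also have "\<dots> \<le> \<bar>a\<bar> powr p + \<bar>c\<bar> powr p"
    by (simp add: max_def)
  finally show ?thesis .
qed

lemma abs_spow_mult_le_add:
  assumes "1 \<le> p"
  shows "\<bar>spow x (p - 1) * y\<bar> \<le> 2 * \<bar>x\<bar> powr p + \<bar>x + y\<bar> powr p"
proof -
  have "spow x (p - 1) * y = spow x (p - 1) * (x + y) - spow x (p - 1) * x"
    by (simp add: algebra_simps)
  also have "\<dots> = spow x (p - 1) * (x + y) - \<bar>x\<bar> powr p"
    using spow_mult_self[of x "p - 1"] by simp
  finally have "\<bar>spow x (p - 1) * y\<bar> \<le> \<bar>spow x (p - 1) * (x + y)\<bar> + \<bar>x\<bar> powr p"
    using abs_triangle_ineq4[of "spow x (p - 1) * (x + y)" "\<bar>x\<bar> powr p"] by simp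
  then show ?thesis
    using abs_spow_mult_le[OF assms, of x "x + y"] by simp
qed

lemma spow_mono:
  assumes "0 \<le> q" "x \<le> y"
  shows "spow x q \<le> spow y q"
  using assms
  by (cases x "0::real" rule: linorder_cases; cases y "0::real" rule: linorder_cases)
     (auto simp: spow_def intro: powr_mono2 order_trans[OF _ powr_ge_zero])

lemma has_real_derivative_abs_powr:
  assumes "1 < p"
  shows "((\<lambda>z. \<bar>z\<bar> powr p) has_real_derivative p * spow x (p - 1)) (at x)"
proof (cases x "0::real" rule: linorder_cases)
  case less
  have "\<forall>\<^sub>F z in nhds x. \<bar>z\<bar> powr p = (- z) powr p"
    using eventually_nhds_in_open[of "{..<0}" x] less by (auto elim!: eventually_mono)
  moreover have "((\<lambda>z. (- z) powr p) has_real_derivative p * spow x (p - 1)) (at x)"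
    using less by (auto intro!: derivative_eq_intros simp: spow_def)
  ultimately show ?thesis
    by (rule DERIV_cong_ev[OF refl _ refl, THEN iffD2])
next
  case greater
  have "\<forall>\<^sub>F z in nhds x. \<bar>z\<bar> powr p = z powr p"
    using eventually_nhds_in_open[of "{0<..}" x] greater by (auto elim!: eventually_mono)
  moreover have "((\<lambda>z. z powr p) has_real_derivative p * spow x (p - 1)) (at x)"
    using greater by (auto intro!: derivative_eq_intros simp: spow_def)
  ultimately show ?thesis
    by (rule DERIV_cong_ev[OF refl _ refl, THEN iffD2])
next
  case equal
  have "((\<lambda>h. \<bar>h\<bar> powr (p - 1)) \<longlongrightarrow> \<bar>0\<bar> powr (p - 1)) (at (0::real))"
    using assms by (intro tendsto_intros) auto
  then have "((\<lambda>h. \<bar>h\<bar> powr (p - 1)) \<longlongrightarrow> 0) (at (0::real))"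
    by simp
  then have "((\<lambda>h. \<bar>h\<bar> powr p / h) \<longlongrightarrow> 0) (at 0)"
  proof (rule Lim_null_comparison[rotated], intro always_eventually allI)
    fix h :: real
    show "norm (\<bar>h\<bar> powr p / h) \<le> \<bar>h\<bar> powr (p - 1)"
      using powr_mult_base'[of "\<bar>h\<bar>" "p - 1"] by (cases "h = 0") (auto simp: abs_divide field_simps)
  qed
  then show ?thesis
    using equal assms by (simp add: DERIV_def spow_def)
qed

lemma convex_on_abs_powr:
  assumes "1 < p"
  shows "convex_on UNIV (\<lambda>z::real. \<bar>z\<bar> powr p)"
  using assms
  by (intro convex_on_realI[where f' = "\<lambda>x. p * spow x (p - 1)"] has_real_derivative_abs_powr
      mult_left_mono spow_mono) auto

lemma abs_powr_convex_le:
  fixes x y :: real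
  assumes "1 < p" "0 \<le> t" "t \<le> 1"
  shows "\<bar>(1 - t) * x + t * y\<bar> powr p \<le> (1 - t) * \<bar>x\<bar> powr p + t * \<bar>y\<bar> powr p"
  using convex_onD[OF convex_on_abs_powr[OF assms(1)], of t x y] assms by simp

lemma abs_powr_ge_tangent:
  fixes x y :: real
  assumes "1 < p"
  shows "\<bar>x\<bar> powr p + p * spow x (p - 1) * (y - x) \<le> \<bar>y\<bar> powr p"
  using convex_on_imp_above_tangent[OF convex_on_abs_powr[OF assms],
      OF _ _ _ has_real_derivative_abs_powr[OF assms, of x, THEN DERIV_subset], of y]
  by auto

lemma abs_powr_difference_quotient_bounds:
  fixes a c t :: real
  assumes p: "1 < p" and t: "0 < t" "t \<le> 1"
  shows "p * spow a (p - 1) * c \<le> (\<bar>a + t * c\<bar> powr p - \<bar>a\<bar> powr p) / t"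
    and "(\<bar>a + t * c\<bar> powr p - \<bar>a\<bar> powr p) / t \<le> \<bar>a + c\<bar> powr p - \<bar>a\<bar> powr p"
proof -
  have "t * (p * spow a (p - 1) * c) \<le> \<bar>a + t * c\<bar> powr p - \<bar>a\<bar> powr p"
    using abs_powr_ge_tangent[OF p, of a "a + t * c"] by (simp add: algebra_simps)
  then show "p * spow a (p - 1) * c \<le> (\<bar>a + t * c\<bar> powr p - \<bar>a\<bar> powr p) / t"
    using t by (simp add: le_divide_eq mult.commute)
  have "\<bar>(1 - t) * a + t * (a + c)\<bar> powr p \<le> (1 - t) * \<bar>a\<bar> powr p + t * \<bar>a + c\<bar> powr p"
    using abs_powr_convex_le[OF p] t by simp
  moreover have "(1 - t) * a + t * (a + c) = a + t * c"
    by algebra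
  ultimately have "\<bar>a + t * c\<bar> powr p - \<bar>a\<bar> powr p \<le> t * (\<bar>a + c\<bar> powr p - \<bar>a\<bar> powr p)"
    by (simp add: algebra_simps)
  then show "(\<bar>a + t * c\<bar> powr p - \<bar>a\<bar> powr p) / t \<le> \<bar>a + c\<bar> powr p - \<bar>a\<bar> powr p"
    using t by (simp add: divide_le_eq mult.commute)
qed

lemma tendsto_abs_powr_difference_quotient:
  fixes a c :: real
  assumes "1 < p"
  shows "((\<lambda>t. (\<bar>a + t * c\<bar> powr p - \<bar>a\<bar> powr p) / t) \<longlongrightarrow> p * spow a (p - 1) * c) (at_right 0)"
proof -
  have "((\<lambda>t. a + t * c) has_real_derivative c) (at 0)"
    by (auto intro!: derivative_eq_intros)
  from DERIV_chain2[OF _ this, OF has_real_derivative_abs_powr[OF assms]]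
  have "((\<lambda>t. \<bar>a + t * c\<bar> powr p) has_real_derivative p * spow a (p - 1) * c) (at 0)"
    by simp
  then have "((\<lambda>t. (\<bar>a + t * c\<bar> powr p - \<bar>a\<bar> powr p) / t) \<longlongrightarrow> p * spow a (p - 1) * c) (at 0)"
    by (simp add: DERIV_def)
  then show ?thesis
    by (rule filterlim_mono) (simp_all add: at_le)
qed

lemma has_sum_diff:
  fixes f g :: "'a \<Rightarrow> 'b::topological_ab_group_add"
  assumes "(f has_sum x) A" "(g has_sum y) A"
  shows "((\<lambda>a. f a - g a) has_sum (x - y)) A"
  using has_sum_add[OF assms(1) has_sum_uminus[where f = g and a = "- y", THEN iffD2]] assms(2) by simp

lemma tendsto_infsum_zero_dominated:
  fixes f :: "'b \<Rightarrow> 'a \<Rightarrow> real"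
  assumes g: "g summable_on A"
    and bound: "\<forall>\<^sub>F x in F. \<forall>q\<in>A. 0 \<le> f x q \<and> f x q \<le> g q"
    and lim: "\<And>q. q \<in> A \<Longrightarrow> ((\<lambda>x. f x q) \<longlongrightarrow> 0) F"
  shows "((\<lambda>x. infsum (f x) A) \<longlongrightarrow> 0) F"
proof (rule tendstoI)
  fix e :: real
  assume "0 < e"
  then obtain S where S: "finite S" "S \<subseteq> A" "dist (sum g S) (infsum g A) \<le> e / 3"
    using infsum_finite_approximation[OF g, of "e / 3"] by auto
  have split: "infsum h A = sum h S + infsum h (A - S)" if "h summable_on A" for h :: "'a \<Rightarrow> real"
    using infsum_Un_disjoint[of h S "A - S"] summable_on_subset[OF that] S
    by (simp add: Un_absorb1)
  have tail: "infsum g (A - S) \<le> e / 3"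
    using split[OF g] S(3) by (simp add: dist_real_def)
  have "((\<lambda>x. sum (f x) S) \<longlongrightarrow> 0) F"
    using tendsto_sum[of S "\<lambda>q x. f x q" "\<lambda>_. 0" F] S(2) lim by auto
  moreover have "(0::real) < e / 3"
    using \<open>0 < e\<close> by simp
  ultimately have "\<forall>\<^sub>F x in F. sum (f x) S < e / 3"
    by (rule order_tendstoD(2))
  with bound show "\<forall>\<^sub>F x in F. dist (infsum (f x) A) 0 < e"
  proof eventually_elim
    case (elim x)
    then have "f x summable_on A"
      by (intro summable_on_comparison_test[OF g]) auto
    then have "infsum (f x) A = sum (f x) S + infsum (f x) (A - S)"
      by (rule split)
    also have "\<dots> \<le> sum (f x) S + infsum g (A - S)"
    proof (intro add_left_mono infsum_mono)
      show "f x summable_on A - S" "g summable_on A - S"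
        using \<open>f x summable_on A\<close> g by (auto intro: summable_on_subset)
    qed (use elim(1) in auto)
    finally have "infsum (f x) A < e"
      using elim(2) tail \<open>0 < e\<close> by linarith
    moreover have "0 \<le> infsum (f x) A"
      using elim(1) by (intro infsum_nonneg) auto
    ultimately show ?case
      by simp
  qed
qed

context
  fixes p :: real and P :: "'q set" and B a c :: "'q \<Rightarrow> real"
  assumes p: "1 < p"
    and B_nonneg: "\<And>q. q \<in> P \<Longrightarrow> 0 \<le> B q"
    and summable_a: "(\<lambda>q. B q * \<bar>a q\<bar> powr p) summable_on P"
    and summable_ac: "(\<lambda>q. B q * \<bar>a q + c q\<bar> powr p) summable_on P"
begin

lemma summable_on_abs_powr_segment:
  assumes "0 \<le> t" "t \<le> 1"
  shows "(\<lambda>q. B q * \<bar>a q + t * c q\<bar> powr p) summable_on P"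
proof (rule summable_on_comparison_test)
  show "(\<lambda>q. (1 - t) * (B q * \<bar>a q\<bar> powr p) + t * (B q * \<bar>a q + c q\<bar> powr p)) summable_on P"
    by (intro summable_on_add summable_on_cmult_right summable_a summable_ac)
next
  fix q
  assume q: "q \<in> P"
  have "a q + t * c q = (1 - t) * a q + t * (a q + c q)"
    by algebra
  then have "B q * \<bar>a q + t * c q\<bar> powr p
      \<le> B q * ((1 - t) * \<bar>a q\<bar> powr p + t * \<bar>a q + c q\<bar> powr p)"
    using abs_powr_convex_le[OF p assms] B_nonneg[OF q] by (intro mult_left_mono) auto
  then show "B q * \<bar>a q + t * c q\<bar> powr p
      \<le> (1 - t) * (B q * \<bar>a q\<bar> powr p) + t * (B q * \<bar>a q + c q\<bar> powr p)"
    by (simp add: algebra_simps)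
  show "0 \<le> B q * \<bar>a q + t * c q\<bar> powr p"
    using B_nonneg[OF q] by simp
qed

lemma summable_on_spow_mult:
  "(\<lambda>q. B q * spow (a q) (p - 1) * c q) summable_on P"
proof -
  have "(\<lambda>q. \<bar>B q * spow (a q) (p - 1) * c q\<bar>) summable_on P"
  proof (rule summable_on_comparison_test)
    show "(\<lambda>q. 2 * (B q * \<bar>a q\<bar> powr p) + B q * \<bar>a q + c q\<bar> powr p) summable_on P"
      by (intro summable_on_add summable_on_cmult_right summable_a summable_ac)
  next
    fix q
    assume q: "q \<in> P"
    have "B q * \<bar>spow (a q) (p - 1) * c q\<bar> \<le> B q * (2 * \<bar>a q\<bar> powr p + \<bar>a q + c q\<bar> powr p)"
      using abs_spow_mult_le_add[OF less_imp_le[OF p]] B_nonneg[OF q] by (rule mult_left_mono)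
    then show "\<bar>B q * spow (a q) (p - 1) * c q\<bar> \<le> 2 * (B q * \<bar>a q\<bar> powr p) + B q * \<bar>a q + c q\<bar> powr p"
      using B_nonneg[OF q] by (simp add: abs_mult algebra_simps)
  qed simp
  then show ?thesis
    by (subst summable_on_iff_abs_summable_on_real) simp
qed

lemma infsum_abs_powr_ge_tangent:
  "(\<Sum>\<^sub>\<infinity>q\<in>P. B q * \<bar>a q\<bar> powr p) + p * (\<Sum>\<^sub>\<infinity>q\<in>P. B q * spow (a q) (p - 1) * c q)
    \<le> (\<Sum>\<^sub>\<infinity>q\<in>P. B q * \<bar>a q + c q\<bar> powr p)"
proof (rule has_sum_mono)
  show "((\<lambda>q. B q * \<bar>a q\<bar> powr p + p * (B q * spow (a q) (p - 1) * c q)) has_sum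
      (\<Sum>\<^sub>\<infinity>q\<in>P. B q * \<bar>a q\<bar> powr p) + p * (\<Sum>\<^sub>\<infinity>q\<in>P. B q * spow (a q) (p - 1) * c q)) P"
    by (intro has_sum_add has_sum_cmult_right has_sum_infsum summable_a summable_on_spow_mult)
  show "((\<lambda>q. B q * \<bar>a q + c q\<bar> powr p) has_sum (\<Sum>\<^sub>\<infinity>q\<in>P. B q * \<bar>a q + c q\<bar> powr p)) P"
    by (rule has_sum_infsum[OF summable_ac])
next
  fix q
  assume q: "q \<in> P"
  have "\<bar>a q\<bar> powr p + p * spow (a q) (p - 1) * c q \<le> \<bar>a q + c q\<bar> powr p"
    using abs_powr_ge_tangent[OF p, of "a q" "a q + c q"] by simp
  from mult_left_mono[OF this B_nonneg[OF q]]
  show "B q * \<bar>a q\<bar> powr p + p * (B q * spow (a q) (p - 1) * c q) \<le> B q * \<bar>a q + c q\<bar> powr p"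
    by (simp add: algebra_simps)
qed

lemma tendsto_infsum_abs_powr_difference_quotient:
  "((\<lambda>t. ((\<Sum>\<^sub>\<infinity>q\<in>P. B q * \<bar>a q + t * c q\<bar> powr p) - (\<Sum>\<^sub>\<infinity>q\<in>P. B q * \<bar>a q\<bar> powr p)) / t)
    \<longlongrightarrow> p * (\<Sum>\<^sub>\<infinity>q\<in>P. B q * spow (a q) (p - 1) * c q)) (at_right 0)"
proof -
  define F where "F = (\<lambda>t q. B q * \<bar>a q + t * c q\<bar> powr p)"
  define C where "C = (\<lambda>q. B q * spow (a q) (p - 1) * c q)"
  define D where "D t q = (F t q - F 0 q) / t - p * C q" for t q
  have D_eq: "D t q = B q * ((\<bar>a q + t * c q\<bar> powr p - \<bar>a q\<bar> powr p) / t - p * spow (a q) (p - 1) * c q)"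
    for t q
    by (simp add: D_def F_def C_def diff_divide_distrib right_diff_distrib)
  have D_has_sum: "(D t has_sum ((infsum (F t) P - infsum (F 0) P) / t - p * infsum C P)) P"
    if "0 \<le> t" "t \<le> 1" for t
    unfolding D_def diff_divide_distrib
    using that summable_a summable_on_abs_powr_segment summable_on_spow_mult
    by (intro has_sum_diff has_sum_divide_const has_sum_cmult_right has_sum_infsum)
       (simp_all add: F_def C_def)
  have D_bounds: "\<forall>q\<in>P. 0 \<le> D t q \<and> D t q \<le> D 1 q" if "0 < t" "t < 1" for t
    using that abs_powr_difference_quotient_bounds[OF p, of t] B_nonneg
    by (auto simp: D_eq intro!: mult_nonneg_nonneg mult_left_mono)
  have "((\<lambda>t. infsum (D t) P) \<longlongrightarrow> 0) (at_right 0)"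
  proof (rule tendsto_infsum_zero_dominated)
    show "D 1 summable_on P"
      using D_has_sum[of 1] by (auto simp: summable_on_def)
    show "\<forall>\<^sub>F t in at_right 0. \<forall>q\<in>P. 0 \<le> D t q \<and> D t q \<le> D 1 q"
      using D_bounds by (auto simp: eventually_at_right_field intro!: exI[of _ 1])
    show "((\<lambda>t. D t q) \<longlongrightarrow> 0) (at_right 0)" for q
      using tendsto_mult_left[OF tendsto_diff[OF tendsto_abs_powr_difference_quotient[OF p] tendsto_const],
          of "B q" "a q" "c q" "p * spow (a q) (p - 1) * c q"]
      by (simp add: D_eq)
  qed
  then have "((\<lambda>t. infsum (D t) P + p * infsum C P) \<longlongrightarrow> 0 + p * infsum C P) (at_right 0)"
    by (intro tendsto_add tendsto_const)
  moreover have "\<forall>\<^sub>F t in at_right 0. infsum (D t) P + p * infsum C P = (infsum (F t) P - infsum (F 0) P) / t"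
    using infsumI[OF D_has_sum] by (auto simp: eventually_at_right_field intro!: exI[of _ 1])
  ultimately have "((\<lambda>t. (infsum (F t) P - infsum (F 0) P) / t) \<longlongrightarrow> p * infsum C P) (at_right 0)"
    by (simp add: tendsto_cong)
  then show ?thesis
    by (simp add: F_def C_def)
qed

end

lemma energy_eq_infsum:
  "energy b p W u w = 1/2 * (\<Sum>\<^sub>\<infinity>q\<in>W \<times> W.
     b (fst q) (snd q) * spow (u (fst q) - u (snd q)) (p - 1) * (w (fst q) - w (snd q)))"
  by (simp add: energy_def case_prod_unfold)

lemma energy_self:
  "energy b p W v v = 1/2 * (\<Sum>\<^sub>\<infinity>q\<in>W \<times> W. b (fst q) (snd q) * \<bar>v (fst q) - v (snd q)\<bar> powr p)"
  using spow_mult_self[of _ "p - 1"] by (simp add: energy_eq_infsum mult.assoc)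

lemma mem_Dp_iff:
  "v \<in> Dp b p W \<longleftrightarrow>
     (\<lambda>q. b (fst q) (snd q) * \<bar>v (fst q) - v (snd q)\<bar> powr p) summable_on W \<times> W"
  by (simp add: Dp_def case_prod_unfold)

context
  fixes b :: "'a \<Rightarrow> 'a \<Rightarrow> real" and p :: real and W :: "'a set" and u v :: "'a \<Rightarrow> real"
  assumes p: "1 < p"
    and b_nonneg: "\<And>x y. 0 \<le> b x y"
    and u: "u \<in> Dp b p W" and v: "v \<in> Dp b p W"
begin

lemma
  shows Dp_segment: "0 \<le> t \<Longrightarrow> t \<le> 1 \<Longrightarrow> (\<lambda>x. u x + t * (v x - u x)) \<in> Dp b p W"
    and energy_ge_tangent: "energy b p W u u + p * energy b p W u (\<lambda>x. v x - u x) \<le> energy b p W v v"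
    and tendsto_energy_difference_quotient:
      "((\<lambda>t. (energy b p W (\<lambda>x. u x + t * (v x - u x)) (\<lambda>x. u x + t * (v x - u x))
          - energy b p W u u) / t) \<longlongrightarrow> p * energy b p W u (\<lambda>x. v x - u x)) (at_right 0)"
proof -
  define B where "B = (\<lambda>q. b (fst q) (snd q))"
  define a where "a = (\<lambda>q. u (fst q) - u (snd q))"
  define c where "c = (\<lambda>q. (v (fst q) - u (fst q)) - (v (snd q) - u (snd q)))"
  have segment: "(\<lambda>x. u x + t * (v x - u x)) (fst q) - (\<lambda>x. u x + t * (v x - u x)) (snd q) = a q + t * c q"
    for t q
    by (simp add: a_def c_def algebra_simps)
  have "\<And>q. q \<in> W \<times> W \<Longrightarrow> 0 \<le> B q"
    and "(\<lambda>q. B q * \<bar>a q\<bar> powr p) summable_on W \<times> W"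
    and "(\<lambda>q. B q * \<bar>a q + c q\<bar> powr p) summable_on W \<times> W"
    using b_nonneg u segment[where t = 1] v by (simp_all add: B_def a_def mem_Dp_iff)
  note sums = p this
  show "0 \<le> t \<Longrightarrow> t \<le> 1 \<Longrightarrow> (\<lambda>x. u x + t * (v x - u x)) \<in> Dp b p W"
    using summable_on_abs_powr_segment[OF sums] by (simp add: mem_Dp_iff segment B_def)
  show "energy b p W u u + p * energy b p W u (\<lambda>x. v x - u x) \<le> energy b p W v v"
    using infsum_abs_powr_ge_tangent[OF sums] segment[where t = 1]
    by (simp add: energy_self energy_eq_infsum B_def a_def c_def)
  show "((\<lambda>t. (energy b p W (\<lambda>x. u x + t * (v x - u x)) (\<lambda>x. u x + t * (v x - u x))
          - energy b p W u u) / t) \<longlongrightarrow> p * energy b p W u (\<lambda>x. v x - u x)) (at_right 0)"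
    using tendsto_mult_left[OF tendsto_infsum_abs_powr_difference_quotient[OF sums], of "1/2"]
    by (simp add: energy_self energy_eq_infsum segment B_def a_def c_def
        diff_divide_distrib[symmetric] divide_divide_eq_left)
qed

end

lemma Kset_segment:
  assumes "1 < p" and "\<And>x y. 0 \<le> b x y"
    and u: "u \<in> Kset b p V \<psi> \<theta>" and v: "v \<in> Kset b p V \<psi> \<theta>" and t: "0 \<le> t" "t \<le> 1"
  shows "(\<lambda>x. u x + t * (v x - u x)) \<in> Kset b p V \<psi> \<theta>"
proof -
  have "(\<lambda>x. u x + t * (v x - u x)) \<in> Dp b p (closure_set b V)"
    using u v by (intro Dp_segment[OF assms(1,2) _ _ t]) (auto simp: Kset_def)
  moreover have "\<psi> x \<le> u x + t * (v x - u x)" if "x \<in> V" for x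
  proof -
    have "(1 - t) * \<psi> x + t * \<psi> x \<le> (1 - t) * u x + t * v x"
      using u v that t by (intro add_mono mult_left_mono) (auto simp: Kset_def)
    then show ?thesis
      by (simp add: algebra_simps)
  qed
  ultimately show ?thesis
    using u v by (auto simp: Kset_def)
qed

lemma variational_inequality_if_energy_minimal:
  assumes p: "1 < p" and b: "\<And>x y. 0 \<le> b x y"
    and u: "u \<in> Kset b p V \<psi> \<theta>" and v: "v \<in> Kset b p V \<psi> \<theta>"
    and min: "\<forall>w\<in>Kset b p V \<psi> \<theta>. energy b p (closure_set b V) u u \<le> energy b p (closure_set b V) w w"
  shows "0 \<le> energy b p (closure_set b V) u (\<lambda>x. v x - u x)"
proof -
  let ?E = "energy b p (closure_set b V)" and ?u = "\<lambda>t x. u x + t * (v x - u x)"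
  have "\<forall>\<^sub>F t in at_right 0. 0 \<le> (?E (?u t) (?u t) - ?E u u) / t"
    using min Kset_segment[OF p b u v] by (auto simp: eventually_at_right_field intro!: exI[of _ 1])
  moreover have "u \<in> Dp b p (closure_set b V)" "v \<in> Dp b p (closure_set b V)"
    using u v by (simp_all add: Kset_def)
  note tendsto_energy_difference_quotient[OF p b this]
  ultimately have "0 \<le> p * ?E u (\<lambda>x. v x - u x)"
    by (intro tendsto_lowerbound) auto
  then show ?thesis
    using p by (simp add: zero_le_mult_iff)
qed

theorem lemma3p23:
  fixes b :: "'a \<Rightarrow> 'a \<Rightarrow> real" and m c :: "'a \<Rightarrow> real"
    and p :: real and V :: "'a set" and \<psi> \<theta> u :: "'a \<Rightarrow> real"
  assumes "weighted_graph b m c" and "c = (\<lambda>_. 0)" and "1 < p"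
    and "u \<in> Kset b p V \<psi> \<theta>"
  shows "obstacle_solution b p V \<psi> \<theta> u \<longleftrightarrow>
    (energy b p (closure_set b V) u u \<in> {energy b p (closure_set b V) v v | v. v \<in> Kset b p V \<psi> \<theta>} \<and>
     (\<forall>v\<in>Kset b p V \<psi> \<theta>. energy b p (closure_set b V) u u \<le> energy b p (closure_set b V) v v))"
proof -
  \<comment> \<open>\<open>energy\<close> has \<open>c = 0\<close> built in, so of the graph axioms only \<open>b \<ge> 0\<close> is used.\<close>
  let ?E = "energy b p (closure_set b V)" and ?K = "Kset b p V \<psi> \<theta>"
  note p = \<open>1 < p\<close> and uK = \<open>u \<in> ?K\<close>
  have b: "\<And>x y. 0 \<le> b x y"
    using assms(1) by (simp add: weighted_graph_def)
  have Dp: "w \<in> Dp b p (closure_set b V)" if "w \<in> ?K" for w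
    using that by (simp add: Kset_def)
  have "(\<forall>v\<in>?K. 0 \<le> ?E u (\<lambda>x. v x - u x)) \<longleftrightarrow> (\<forall>v\<in>?K. ?E u u \<le> ?E v v)"
  proof (intro iffI ballI)
    fix v
    assume "\<forall>v\<in>?K. 0 \<le> ?E u (\<lambda>x. v x - u x)" and v: "v \<in> ?K"
    then have "0 \<le> p * ?E u (\<lambda>x. v x - u x)"
      using p by simp
    then show "?E u u \<le> ?E v v"
      using energy_ge_tangent[OF p b Dp[OF uK] Dp[OF v]] by linarith
  qed (rule variational_inequality_if_energy_minimal[OF p b uK])
  then show ?thesis
    using uK by (auto simp: obstacle_solution_def)
qed

end
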